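(* Fix $t\in(0,\infty)$. For $0\le\beta\le1$ let $\varphi_\beta$ be the function equal to $1$ on $B(0;\frac{1-\beta}2)$, equal to $\frac12$ on $B(0;\frac{1+\beta}2)\setminus B(0;\frac{1-\beta}2)$, and $0$ elsewhere, and let $\mu(\beta):=\xi(\varphi_\beta,t)$. Then $$\max_{0\le\beta\le1}\mu(\beta)=\max\{\mu(0),\mu(1)\}.$$
   Context: $\|\cdot\|$ is a norm on $\mathbb R^d$, $B(x;\rho)=\{y:\|x-y\|<\rho\}$ (with $B(0;0)=\emptyset$). $H(x)=x\ln x-x+1$. For nonnegative bounded measurable $\varphi$ with $0<\int\varphi<\infty$ and $0<t<\infty$, $s(\varphi,t)$ is the unique $s\ge0$ with $\int H(e^{s\varphi})=1/t$, and $\xi(\varphi,t):=\int\varphi e^{s(\varphi,t)\varphi}$. *)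

theory Defs
  imports "HOL-Analysis.Analysis"
begin

definition is_norm :: "('a::euclidean_space \<Rightarrow> real) \<Rightarrow> bool" where
  "is_norm N \<longleftrightarrow> (\<forall>x. N x = 0 \<longleftrightarrow> x = 0)
     \<and> (\<forall>c x. N (c *\<^sub>R x) = \<bar>c\<bar> * N x)
     \<and> (\<forall>x y. N (x + y) \<le> N x + N y)"

definition nball :: "('a::euclidean_space \<Rightarrow> real) \<Rightarrow> 'a \<Rightarrow> real \<Rightarrow> 'a set" where
  "nball N x \<rho> = {y. N (x - y) < \<rho>}"

definition Hfun :: "real \<Rightarrow> real" where
  "Hfun x = x * ln x - x + 1"

definition s_par :: "('a::euclidean_space \<Rightarrow> real) \<Rightarrow> real \<Rightarrow> real" where
  "s_par \<phi> t = (THE s. s \<ge> 0 \<and> (\<integral>x. Hfun (exp (s * \<phi> x)) \<partial>lborel) = 1 / t)"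

definition xi :: "('a::euclidean_space \<Rightarrow> real) \<Rightarrow> real \<Rightarrow> real" where
  "xi \<phi> t = (\<integral>x. \<phi> x * exp (s_par \<phi> t * \<phi> x) \<partial>lborel)"

definition phi_beta :: "('a::euclidean_space \<Rightarrow> real) \<Rightarrow> real \<Rightarrow> 'a \<Rightarrow> real" where
  "phi_beta N \<beta> x =
     (if x \<in> nball N 0 ((1 - \<beta>) / 2) then 1
      else if x \<in> nball N 0 ((1 + \<beta>) / 2) then 1 / 2 else 0)"

end

theory Submission
  imports Defs
begin

text \<open>
  Let d = dim and k the volume of the N-ball of radius 1/2. The function phi_beta
  takes the value 1 on a set of volume P = k (1-beta)^d and 1/2 on a set of volume
  Q = k ((1+beta)^d - (1-beta)^d), so s = s(phi_beta, t) is the unique root of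
  P H(e^s) + Q H(e^(s/2)) = 1/t and xi(phi_beta, t) = P e^s + Q e^(s/2)/2.
  Bounding exp by its tangent at s gives, for every r > 0, an upper bound for r xi that is
  affine in (P, Q) and exact for the parameter r belonging to (P, Q) itself. Comparing
  beta with the endpoints beta = 0 (parameters (k, 0)) and beta = 1 (parameters (0, k 2^d))
  in this way reduces the claim to an algebraic dichotomy, which in turn rests on the
  polynomial inequality (1-beta)^d ((1+beta)^d - 1)^2 <= (2^d - (1+beta)^d)(1 - (1-beta)^d)^2.
\<close>

lemma is_normD:
  assumes "is_norm N"
  shows is_norm_eq_0: "N x = 0 \<longleftrightarrow> x = 0"
    and is_norm_scale: "N (c *\<^sub>R x) = \<bar>c\<bar> * N x"
    and is_norm_triangle: "N (x + y) \<le> N x + N y"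
    and is_norm_zero: "N 0 = 0"
    and is_norm_minus: "N (- x) = N x"
    and is_norm_nonneg: "0 \<le> N x"
proof -
  show eq0: "N x = 0 \<longleftrightarrow> x = 0" and scale: "N (c *\<^sub>R x) = \<bar>c\<bar> * N x"
    and tri: "N (x + y) \<le> N x + N y" for x y c
    using assms unfolding is_norm_def by auto
  show "N 0 = 0" using eq0 by simp
  show "N (- x) = N x" using scale[of "-1" x] by simp
  show "0 \<le> N x" using tri[of x "- x"] scale[of "-1" x] eq0[of 0] by simp
qed

lemma is_norm_le_norm:
  assumes "is_norm N"
  shows "N x \<le> (\<Sum>b\<in>Basis. N b) * norm x"
proof -
  have "N x = N (\<Sum>b\<in>Basis. (x \<bullet> b) *\<^sub>R b)" by (simp add: euclidean_representation)
  also have "\<dots> \<le> (\<Sum>b\<in>Basis. N ((x \<bullet> b) *\<^sub>R b))"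
    by (induction rule: finite_induct[OF finite_Basis])
       (auto intro: order_trans[OF is_norm_triangle[OF assms]] simp: is_norm_zero[OF assms])
  also have "\<dots> \<le> (\<Sum>b\<in>Basis. norm x * N b)"
    by (intro sum_mono) (auto simp: is_norm_scale[OF assms] Basis_le_norm
        intro!: mult_right_mono is_norm_nonneg[OF assms])
  finally show ?thesis by (simp add: sum_distrib_left sum_distrib_right mult.commute)
qed

lemma is_norm_continuous:
  assumes "is_norm N"
  shows "continuous_on S N"
proof (rule lipschitz_on_continuous_on)
  show "(\<Sum>b\<in>Basis. N b)-lipschitz_on S N"
  proof (rule lipschitz_onI)
    fix x y
    have "N x \<le> N (x - y) + N y" "N y \<le> N (y - x) + N x"
      using is_norm_triangle[OF assms, of "x - y" y] is_norm_triangle[OF assms, of "y - x" x] by auto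
    moreover have "N (y - x) = N (x - y)" using is_norm_minus[OF assms, of "x - y"] by simp
    ultimately show "dist (N x) (N y) \<le> (\<Sum>b\<in>Basis. N b) * dist x y"
      using is_norm_le_norm[OF assms, of "x - y"] by (simp add: dist_real_def dist_norm)
  qed (simp add: sum_nonneg is_norm_nonneg[OF assms])
qed

text \<open>Conversely, by compactness of the unit sphere, N dominates a multiple of the Euclidean norm.\<close>
lemma is_norm_ge_norm:
  assumes "is_norm N"
  obtains c where "c > 0" "\<And>x. c * norm x \<le> N x"
proof -
  obtain b :: 'a where "b \<in> Basis" using nonempty_Basis by blast
  then have "sphere (0::'a) 1 \<noteq> {}" by auto
  then obtain x0 where x0: "x0 \<in> sphere 0 1" "\<And>y. y \<in> sphere 0 1 \<Longrightarrow> N x0 \<le> N y"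
    using continuous_attains_inf[OF compact_sphere _ is_norm_continuous[OF assms]] by blast
  have "N x0 > 0"
    using x0(1) is_norm_eq_0[OF assms, of x0] is_norm_nonneg[OF assms, of x0] by auto
  moreover have "N x0 * norm x \<le> N x" for x
  proof (cases "x = 0")
    case False
    then have "N x0 \<le> N ((1 / norm x) *\<^sub>R x)" by (intro x0(2)) simp
    also have "\<dots> = N x / norm x" by (simp add: is_norm_scale[OF assms])
    finally show ?thesis using False by (simp add: field_simps)
  qed (simp add: is_norm_zero[OF assms])
  ultimately show ?thesis using that by blast
qed

lemma nball_zero_eq: "is_norm N \<Longrightarrow> nball N 0 r = {y. N y < r}"
  unfolding nball_def by (metis diff_0 is_norm_minus)

lemma nball_sets:
  assumes "is_norm N"
  shows "nball N 0 r \<in> sets lborel"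
proof -
  have "open (nball N 0 r)"
    unfolding nball_zero_eq[OF assms]
    by (rule open_Collect_less[OF is_norm_continuous[OF assms] continuous_on_const])
  then show ?thesis by simp
qed

lemma nball_fmeasurable:
  assumes "is_norm N"
  shows "nball N 0 r \<in> fmeasurable lborel"
proof -
  obtain c where c: "c > 0" "\<And>x. c * norm x \<le> N x" using is_norm_ge_norm[OF assms] by blast
  have "nball N 0 r \<subseteq> cball 0 (r / c)"
    using c by (auto simp: nball_zero_eq[OF assms] pos_le_divide_eq mult.commute
        intro: order_trans[OF c(2) less_imp_le])
  then have "bounded (nball N 0 r)" using bounded_cball bounded_subset by blast
  then show ?thesis
    using emeasure_bounded_finite nball_sets[OF assms] by (metis fmeasurableI)
qed

lemma measure_nball:
  fixes N :: "'a::euclidean_space \<Rightarrow> real"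
  assumes "is_norm N" and "r \<ge> 0"
  shows "measure lborel (nball N 0 r) = r ^ DIM('a) * measure lborel (nball N 0 1)"
proof (cases "r = 0")
  case True
  then have "nball N 0 r = {}"
    using is_norm_nonneg[OF assms(1)] by (auto simp: nball_zero_eq[OF assms(1)] not_less)
  then show ?thesis using True by simp
next
  case False
  then have r: "r > 0" using assms(2) by simp
  have "nball N 0 r = (\<lambda>x. r *\<^sub>R x + 0) ` nball N 0 1"
  proof (intro equalityI subsetI)
    fix y assume "y \<in> nball N 0 r"
    then have "(1 / r) *\<^sub>R y \<in> nball N 0 1" and "y = r *\<^sub>R ((1 / r) *\<^sub>R y) + 0"
      using r by (auto simp: nball_zero_eq[OF assms(1)] is_norm_scale[OF assms(1)])
    then show "y \<in> (\<lambda>x. r *\<^sub>R x + 0) ` nball N 0 1" by blast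
  qed (use r in \<open>auto simp: nball_zero_eq[OF assms(1)] is_norm_scale[OF assms(1)]\<close>)
  then have "measure lebesgue (nball N 0 r) = r ^ DIM('a) * measure lebesgue (nball N 0 1)"
    using measure_lebesgue_affine[of r 0 "nball N 0 1"] r by simp
  then show ?thesis using nball_sets[OF assms(1)] by simp
qed

text \<open>The unit N-ball contains a Euclidean ball, so it has positive volume.\<close>
lemma measure_nball_pos:
  fixes N :: "'a::euclidean_space \<Rightarrow> real"
  assumes "is_norm N"
  shows "measure lborel (nball N 0 1) > 0"
proof -
  define C where "C = (\<Sum>b\<in>Basis. N b) + 1"
  have C: "C > 0" unfolding C_def by (simp add: sum_nonneg add_nonneg_pos is_norm_nonneg[OF assms])
  have "N x < 1" if "norm x < 1 / C" for x
  proof -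
    have "N x \<le> C * norm x"
      using is_norm_le_norm[OF assms, of x] unfolding C_def
      by (simp add: distrib_right add_increasing2)
    also have "\<dots> < 1" using that C by (simp add: pos_less_divide_eq mult.commute)
    finally show ?thesis .
  qed
  then have "ball 0 (1 / C) \<subseteq> nball N 0 1" by (auto simp: nball_zero_eq[OF assms])
  then have "measure lborel (ball (0::'a) (1 / C)) \<le> measure lborel (nball N 0 1)"
    by (rule measure_mono_fmeasurable[OF _ _ nball_fmeasurable[OF assms]]) auto
  moreover have "measure lborel (ball (0::'a) (1 / C)) > 0" using C by simp
  ultimately show ?thesis by linarith
qed

text \<open>hexp s = H(e^s), the integrand of the equation defining s at a point where phi = 1.\<close>
definition hexp :: "real \<Rightarrow> real" where
  "hexp s = s * exp s - exp s + 1"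

lemma Hfun_exp: "Hfun (exp s) = hexp s"
  by (simp add: Hfun_def hexp_def)

text \<open>hexp' s = s e^s, so hexp is strictly increasing on [0, oo).\<close>
lemma hexp_strict_mono:
  assumes "0 \<le> x" "x < y"
  shows "hexp x < hexp y"
proof (rule DERIV_pos_imp_increasing_open[OF assms(2)])
  fix z assume "x < z" "z < y"
  then show "\<exists>d. DERIV hexp z :> d \<and> d > 0"
    using assms by (intro exI[of _ "z * exp z"]) (auto simp: hexp_def[abs_def] intro!: derivative_eq_intros)
qed (auto simp: hexp_def intro!: continuous_intros)

lemma hexp_mono: "0 \<le> x \<Longrightarrow> x \<le> y \<Longrightarrow> hexp x \<le> hexp y"
  using hexp_strict_mono[of x y] by (cases "x = y") auto

lemma hexp_nonneg: "0 \<le> s \<Longrightarrow> 0 \<le> hexp s"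
  using hexp_mono[of 0 s] by (simp add: hexp_def)

text \<open>Since e^s >= 1 + s, H(e^s) grows at least quadratically.\<close>
lemma hexp_ge_square:
  assumes "1 \<le> s"
  shows "s^2 \<le> hexp s"
proof -
  have "(s - 1) * (1 + s) \<le> (s - 1) * exp s"
    using assms exp_ge_add_one_self[of s] by (intro mult_left_mono) auto
  then show ?thesis by (simp add: hexp_def power2_eq_square algebra_simps)
qed

text \<open>For a function taking the value 1 on a set of measure p and 1/2 on a set of measure q
  (and 0 elsewhere), the integrals defining s and xi reduce to the following two expressions.\<close>
definition H_lev :: "real \<Rightarrow> real \<Rightarrow> real \<Rightarrow> real" where
  "H_lev p q s = p * hexp s + q * hexp (s / 2)"

definition xi_lev :: "real \<Rightarrow> real \<Rightarrow> real \<Rightarrow> real" where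
  "xi_lev p q s = p * exp s + q * (exp (s / 2) / 2)"

lemma H_lev_zero: "H_lev p q 0 = 0"
  by (simp add: H_lev_def hexp_def)

lemma H_lev_strict_mono:
  assumes "p \<ge> 0" "q \<ge> 0" "p + q > 0" "0 \<le> x" "x < y"
  shows "H_lev p q x < H_lev p q y"
proof -
  have "p * hexp x \<le> p * hexp y" "q * hexp (x/2) \<le> q * hexp (y/2)"
    using assms by (auto intro!: mult_left_mono hexp_mono)
  moreover have "p * hexp x < p * hexp y \<or> q * hexp (x/2) < q * hexp (y/2)"
    using assms hexp_strict_mono[of x y] hexp_strict_mono[of "x/2" "y/2"]
    by (cases "p > 0") auto
  ultimately show ?thesis by (auto simp: H_lev_def)
qed

lemma H_lev_unique_root:
  assumes pq: "p \<ge> 0" "q \<ge> 0" "p + q > 0" and c: "c > 0"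
  shows "\<exists>!s. s \<ge> 0 \<and> H_lev p q s = c"
proof -
  define R where "R = 1 + c / (p + q)"
  define S where "S = 2 * R"
  have R: "R \<ge> 1" using pq c by (simp add: R_def)
  have "c / (p + q) \<le> R" by (simp add: R_def)
  also have "\<dots> \<le> R^2" using R by (simp add: power2_eq_square)
  also have "\<dots> \<le> hexp R" using R by (rule hexp_ge_square)
  finally have "c \<le> (p + q) * hexp R" using pq by (simp add: divide_le_eq mult.commute)
  also have "\<dots> \<le> H_lev p q S"
    using pq R hexp_mono[of R S] by (auto simp: H_lev_def S_def distrib_right intro!: mult_left_mono)
  finally have "c \<le> H_lev p q S" .
  moreover have "continuous_on {0..S} (H_lev p q)"
    unfolding H_lev_def hexp_def by (intro continuous_intros) auto
  ultimately obtain s where s: "0 \<le> s" "H_lev p q s = c"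
    using IVT'[of "H_lev p q" 0 c S] R c by (auto simp: H_lev_zero S_def)
  show ?thesis
  proof (rule ex1I[of _ s])
    fix s' assume "s' \<ge> 0 \<and> H_lev p q s' = c"
    then show "s' = s"
      using H_lev_strict_mono[OF pq, of s s'] H_lev_strict_mono[OF pq, of s' s] s
      by (cases s s' rule: linorder_cases) auto
  qed (use s in simp)
qed

text \<open>Integral of g(phi_beta) for g(0) = 0: phi_beta is 1 on a ball of radius (1-beta)/2
  and 1/2 on the annulus up to radius (1+beta)/2; with k the volume of the N-ball of
  radius 1/2, these sets have volumes k(1-beta)^d and k((1+beta)^d - (1-beta)^d).\<close>
lemma integral_phi_beta:
  fixes N :: "'a::euclidean_space \<Rightarrow> real"
  assumes a: "is_norm N" and b: "0 \<le> \<beta>" "\<beta> \<le> 1" and g0: "g 0 = 0"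
  defines "k \<equiv> measure lborel (nball N 0 1) / 2 ^ DIM('a)"
  shows "(\<integral>x. g (phi_beta N \<beta> x) \<partial>lborel)
       = g 1 * (k * (1 - \<beta>) ^ DIM('a)) + g (1/2) * (k * ((1 + \<beta>) ^ DIM('a) - (1 - \<beta>) ^ DIM('a)))"
proof -
  define B1 where "B1 = nball N 0 ((1 - \<beta>)/2)"
  define B2 where "B2 = nball N 0 ((1 + \<beta>)/2)"
  have sub: "B1 \<subseteq> B2" using b by (auto simp: B1_def B2_def nball_def)
  have fm: "B1 \<in> fmeasurable lborel" "B2 \<in> fmeasurable lborel"
    using nball_fmeasurable[OF a] by (auto simp: B1_def B2_def)
  then have fm_diff: "B2 - B1 \<in> fmeasurable lborel" by auto
  have "(\<lambda>x. g (phi_beta N \<beta> x)) = (\<lambda>x. g 1 * indicator B1 x + g (1/2) * indicator (B2 - B1) x)"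
    using sub by (auto simp: fun_eq_iff phi_beta_def B1_def[symmetric] B2_def[symmetric] indicator_def g0)
  then have "(\<integral>x. g (phi_beta N \<beta> x) \<partial>lborel)
      = g 1 * measure lborel B1 + g (1/2) * measure lborel (B2 - B1)"
    using fm fm_diff by (simp add: fmeasurable_def integrable_real_indicator)
  also have "measure lborel (B2 - B1) = measure lborel B2 - measure lborel B1"
    using fm sub by (intro measure_Diff) (auto simp: fmeasurable_def)
  moreover have "measure lborel B1 = k * (1 - \<beta>) ^ DIM('a)" "measure lborel B2 = k * (1 + \<beta>) ^ DIM('a)"
    using measure_nball[OF a, of "(1 - \<beta>)/2"] measure_nball[OF a, of "(1 + \<beta>)/2"] b
    by (simp_all add: B1_def B2_def k_def power_divide)
  ultimately show ?thesis by (simp add: right_diff_distrib)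
qed

lemma xi_phi_beta:
  fixes N :: "'a::euclidean_space \<Rightarrow> real"
  assumes a: "is_norm N" and b: "0 \<le> \<beta>" "\<beta> \<le> 1" and t: "t > 0"
  defines "k \<equiv> measure lborel (nball N 0 1) / 2 ^ DIM('a)"
  defines "P \<equiv> k * (1 - \<beta>) ^ DIM('a)" and "Q \<equiv> k * ((1 + \<beta>) ^ DIM('a) - (1 - \<beta>) ^ DIM('a))"
  shows "\<exists>s\<ge>0. H_lev P Q s = 1 / t \<and> xi (phi_beta N \<beta>) t = xi_lev P Q s"
proof -
  have k: "k > 0" using measure_nball_pos[OF a] by (simp add: k_def)
  have "P \<ge> 0" "Q \<ge> 0" "P + Q > 0"
    using k b by (auto simp: P_def Q_def power_mono algebra_simps)
  then have "\<exists>!s. s \<ge> 0 \<and> H_lev P Q s = 1 / t" using t by (intro H_lev_unique_root) auto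
  moreover have "(\<integral>x. Hfun (exp (s * phi_beta N \<beta> x)) \<partial>lborel) = H_lev P Q s" for s
    using integral_phi_beta[OF a b, of "\<lambda>y. Hfun (exp (s * y))"]
    by (simp add: Hfun_exp Hfun_def[of 1] H_lev_def P_def Q_def k_def mult.commute)
  ultimately have "s_par (phi_beta N \<beta>) t \<ge> 0 \<and> H_lev P Q (s_par (phi_beta N \<beta>) t) = 1 / t"
    unfolding s_par_def by (simp add: theI'[where P = "\<lambda>s. s \<ge> 0 \<and> H_lev P Q s = 1 / t"])
  moreover have "xi (phi_beta N \<beta>) t = xi_lev P Q (s_par (phi_beta N \<beta>) t)"
    using integral_phi_beta[OF a b, of "\<lambda>y. y * exp (s_par (phi_beta N \<beta>) t * y)"]
    by (simp add: xi_def xi_lev_def P_def Q_def k_def field_simps)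
  ultimately show ?thesis by blast
qed

text \<open>Tangent-line bound: replacing exp by its tangents at s (convexity) shows that
  r * xi_lev p q s is bounded by an expression affine in (p, q), for every r.\<close>
lemma xi_lev_tangent_bound:
  assumes "p \<ge> 0" "q \<ge> 0"
  shows "r * xi_lev p q s \<le> H_lev p q s + p * (exp r - 1) + q * (exp (r/2) - 1)"
proof -
  have tangent: "exp a * (1 + (b - a)) \<le> exp b" for a b :: real
    using mult_left_mono[OF exp_ge_add_one_self[of "b - a"], of "exp a"] by (simp add: mult_exp_exp)
  have "p * (exp s * (1 + (r - s))) \<le> p * exp r"
    "q * (exp (s/2) * (1 + (r/2 - s/2))) \<le> q * exp (r/2)"
    using assms tangent by (auto intro: mult_left_mono)
  then show ?thesis by (simp add: xi_lev_def H_lev_def hexp_def algebra_simps)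
qed

lemma xi_lev_identity: "s * xi_lev p q s = H_lev p q s + p * (exp s - 1) + q * (exp (s/2) - 1)"
  by (simp add: xi_lev_def H_lev_def hexp_def algebra_simps)

lemma xi_lev_comparison:
  assumes "p \<ge> 0" "q \<ge> 0" "r > 0" and same_level: "H_lev p q s = H_lev p0 q0 r"
    and cost: "p * (exp r - 1) + q * (exp (r/2) - 1) \<le> p0 * (exp r - 1) + q0 * (exp (r/2) - 1)"
  shows "xi_lev p q s \<le> xi_lev p0 q0 r"
proof -
  have "r * xi_lev p q s \<le> H_lev p q s + p * (exp r - 1) + q * (exp (r/2) - 1)"
    using assms(1,2) by (rule xi_lev_tangent_bound)
  also have "\<dots> \<le> r * xi_lev p0 q0 r"
    using same_level cost xi_lev_identity[of r p0 q0] by simp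
  finally show ?thesis using \<open>r > 0\<close> by simp
qed

text \<open>Convexity of x^n on [1, 2].\<close>
lemma power_one_plus_le:
  assumes "0 \<le> (\<beta>::real)" "\<beta> \<le> 1"
  shows "(1 + \<beta>) ^ n \<le> \<beta> * 2 ^ n + (1 - \<beta>)"
proof (induction n)
  case (Suc n)
  have "(1 + \<beta>) ^ Suc n \<le> (1 + \<beta>) * (\<beta> * 2 ^ n + (1 - \<beta>))"
    using Suc assms by (simp add: mult_left_mono)
  also have "\<dots> \<le> \<beta> * 2 ^ Suc n + (1 - \<beta>)"
  proof -
    have "\<beta> * (1 - \<beta>) * (1 - 2 ^ n) \<le> 0" using assms by (intro mult_nonneg_nonpos) auto
    then show ?thesis by (simp add: algebra_simps)
  qed
  finally show ?case .
qed simp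

lemma power_one_plus_times_one_minus:
  assumes "0 \<le> (\<beta>::real)" "\<beta> \<le> 1"
  shows "((1 + \<beta>) ^ Suc n - 1) * (1 - \<beta>) ^ n \<le> 1 - (1 - \<beta>) ^ Suc n"
proof (induction n)
  case (Suc n)
  define A where "A = (1 + \<beta>) ^ Suc n"
  define B where "B = (1 - \<beta>) ^ n"
  have IH: "(A - 1) * B \<le> 1 - (1 - \<beta>) * B" using Suc by (simp add: A_def B_def)
  have "((1 + \<beta>) * (1 - \<beta>)) * ((A - 1) * B - (1 - (1 - \<beta>) * B)) \<le> 0"
    using IH assms by (intro mult_nonneg_nonpos) auto
  moreover have "\<beta>^2 * ((1 - \<beta>) * B - 1) \<le> 0"
    using assms by (intro mult_nonneg_nonpos) (auto simp: B_def power_le_one simp flip: power_Suc)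
  moreover have "((1 + \<beta>) * A - 1) * ((1 - \<beta>) * B) - (1 - (1 - \<beta>) * ((1 - \<beta>) * B)) =
      ((1 + \<beta>) * (1 - \<beta>)) * ((A - 1) * B - (1 - (1 - \<beta>) * B)) + \<beta>^2 * ((1 - \<beta>) * B - 1)"
    by (simp add: power2_eq_square algebra_simps)
  ultimately show ?case by (simp add: A_def B_def)
qed simp

lemma phi_beta_poly_ineq:
  assumes "0 \<le> (\<beta>::real)" "\<beta> \<le> 1" "d \<ge> 1"
  shows "(1 - \<beta>) ^ d * ((1 + \<beta>) ^ d - 1)^2 \<le> (2 ^ d - (1 + \<beta>) ^ d) * (1 - (1 - \<beta>) ^ d)^2"
proof -
  have i: "((1 + \<beta>) ^ d - 1) * (1 - \<beta>) ^ (d - 1) \<le> 1 - (1 - \<beta>) ^ d"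
    using power_one_plus_times_one_minus[OF assms(1,2), of "d - 1"] assms(3) by simp
  have ii: "((1 + \<beta>) ^ d - 1) * (1 - \<beta>) \<le> (2 ^ d - (1 + \<beta>) ^ d) * \<beta>"
    using power_one_plus_le[OF assms(1,2), of d] by (simp add: algebra_simps)
  have iii: "\<beta> \<le> 1 - (1 - \<beta>) ^ d"
    using power_decreasing[of 1 d "1 - \<beta>"] assms by simp
  have nonneg: "0 \<le> (1 + \<beta>) ^ d - 1" "0 \<le> 2 ^ d - (1 + \<beta>) ^ d" "0 \<le> 1 - (1 - \<beta>) ^ d"
    using assms by (auto simp: power_mono power_le_one)
  have "(1 - \<beta>) ^ d * ((1 + \<beta>) ^ d - 1)^2
      = (((1 + \<beta>) ^ d - 1) * (1 - \<beta>) ^ (d - 1)) * (((1 + \<beta>) ^ d - 1) * (1 - \<beta>))"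
    using assms by (cases d) (auto simp: power2_eq_square algebra_simps)
  also have "\<dots> \<le> (1 - (1 - \<beta>) ^ d) * ((2 ^ d - (1 + \<beta>) ^ d) * \<beta>)"
    using nonneg assms by (intro mult_mono[OF i ii]) auto
  also have "\<dots> \<le> (1 - (1 - \<beta>) ^ d) * ((2 ^ d - (1 + \<beta>) ^ d) * (1 - (1 - \<beta>) ^ d))"
    using iii nonneg by (intro mult_left_mono) auto
  finally show ?thesis by (simp add: power2_eq_square algebra_simps)
qed

text \<open>With x0 = e^(s0/2), x1 = e^(s1/2), the linearised cost of
  (W, PP - W) is below that of the endpoint (1, 0) at s0, or below that of (0, D) at s1.
  The two cost differences factor as (x0 - 1)(PP - 1 - (1 - W) x0) and (x1 - 1)(W x1 + PP - D).\<close>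
lemma endpoint_dichotomy:
  fixes W PP D x0 x1 :: real
  assumes W: "0 \<le> W" "W < 1" and poly: "W * (PP - 1)^2 \<le> (D - PP) * (1 - W)^2"
    and x: "1 \<le> x0" "1 \<le> x1" "x1 \<le> x0^2"
  shows "W * (x0^2 - 1) + (PP - W) * (x0 - 1) \<le> x0^2 - 1
       \<or> W * (x1^2 - 1) + (PP - W) * (x1 - 1) \<le> D * (x1 - 1)"
proof (cases "PP - 1 \<le> (1 - W) * x0")
  case True
  then have "(x0 - 1) * (PP - 1 - (1 - W) * x0) \<le> 0"
    using x by (intro mult_nonneg_nonpos) auto
  then show ?thesis by (simp add: power2_eq_square algebra_simps)
next
  case False
  then have "((1 - W) * x0)^2 \<le> (PP - 1)^2"
    using W x by (intro power_mono) auto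
  then have "W * ((1 - W) * x0)^2 \<le> (D - PP) * (1 - W)^2"
    using W poly by (meson mult_left_mono order_trans)
  then have "(W * x0^2) * (1 - W)^2 \<le> (D - PP) * (1 - W)^2"
    by (simp add: power_mult_distrib mult_ac)
  then have "W * x0^2 \<le> D - PP" using W by simp
  moreover have "W * x1 \<le> W * x0^2" using W x by (simp add: mult_left_mono)
  ultimately have "(x1 - 1) * (W * x1 + PP - D) \<le> 0"
    using x by (intro mult_nonneg_nonpos) auto
  then show ?thesis by (simp add: power2_eq_square algebra_simps)
qed

lemma xi_lev_le_endpoints:
  fixes k c D W PP s s0 s1 :: real
  assumes k: "k > 0" and c: "c > 0" and D: "1 \<le> D"
    and W: "0 \<le> W" "W < 1" "W \<le> PP" and poly: "W * (PP - 1)^2 \<le> (D - PP) * (1 - W)^2"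
    and s: "H_lev (k * W) (k * (PP - W)) s = c"
    and s0: "s0 \<ge> 0" "H_lev k 0 s0 = c"
    and s1: "s1 \<ge> 0" "H_lev 0 (k * D) s1 = c"
  shows "xi_lev (k * W) (k * (PP - W)) s \<le> max (xi_lev k 0 s0) (xi_lev 0 (k * D) s1)"
proof -
  have pos: "s0 > 0" "s1 > 0" using s0 s1 c by (auto simp: less_le H_lev_zero)
  have "hexp (s1/2) \<le> hexp s0"
  proof -
    have "k * D * hexp (s1/2) = k * hexp s0" using s0 s1 by (simp add: H_lev_def)
    moreover have "hexp (s1/2) \<le> D * hexp (s1/2)"
      using mult_right_mono[OF D hexp_nonneg[of "s1/2"]] s1(1) by simp
    ultimately show ?thesis using k by (simp add: mult.assoc)
  qed
  then have "s1/2 \<le> s0" using hexp_strict_mono[of s0 "s1/2"] s0 by fastforce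
  define x0 where "x0 = exp (s0/2)"
  define x1 where "x1 = exp (s1/2)"
  have exp_sq: "exp s0 = x0^2" "exp s1 = x1^2"
    by (simp_all add: x0_def x1_def power2_eq_square flip: exp_add)
  have "x1 \<le> x0^2" unfolding exp_sq(1)[symmetric] x1_def using \<open>s1/2 \<le> s0\<close> by simp
  moreover have "1 \<le> x0" "1 \<le> x1" using s0 s1 by (simp_all add: x0_def x1_def)
  ultimately have "1 \<le> x0" "1 \<le> x1" "x1 \<le> x0^2" by simp_all
  from endpoint_dichotomy[OF W(1,2) poly this] show ?thesis
  proof
    assume "W * (x0^2 - 1) + (PP - W) * (x0 - 1) \<le> x0^2 - 1"
    then have "xi_lev (k * W) (k * (PP - W)) s \<le> xi_lev k 0 s0"
      using k W pos s s0 by (intro xi_lev_comparison)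
        (auto simp: exp_sq x0_def[symmetric] mult_left_mono mult.assoc simp flip: distrib_left)
    then show ?thesis by simp
  next
    assume "W * (x1^2 - 1) + (PP - W) * (x1 - 1) \<le> D * (x1 - 1)"
    then have "xi_lev (k * W) (k * (PP - W)) s \<le> xi_lev 0 (k * D) s1"
      using k W pos s s1 by (intro xi_lev_comparison)
        (auto simp: exp_sq x1_def[symmetric] mult_left_mono mult.assoc simp flip: distrib_left)
    then show ?thesis by simp
  qed
qed

lemma max_at_two_points:
  fixes f :: "'b \<Rightarrow> real"
  assumes "a \<in> S" "b \<in> S" and bound: "\<And>x. x \<in> S \<Longrightarrow> f x \<le> max (f a) (f b)"
  shows "(\<exists>x0\<in>S. \<forall>x\<in>S. f x \<le> f x0) \<and> (SUP x\<in>S. f x) = max (f a) (f b)"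
proof
  show "\<exists>x0\<in>S. \<forall>x\<in>S. f x \<le> f x0"
    using assms by (cases "f b \<le> f a") (auto simp: max_def)
  show "(SUP x\<in>S. f x) = max (f a) (f b)"
    using assms by (intro cSup_eq_maximum) (auto simp: max_def)
qed

theorem lemma6p5:
  fixes N :: "'a::euclidean_space \<Rightarrow> real" and t :: real
    and \<mu> :: "real \<Rightarrow> real"
  assumes "is_norm N" and "0 < t"
    and "\<And>\<beta>. \<mu> \<beta> = xi (phi_beta N \<beta>) t"
  shows "(\<exists>\<beta>0\<in>{0..1}. \<forall>\<beta>\<in>{0..1}. \<mu> \<beta> \<le> \<mu> \<beta>0)
       \<and> (SUP \<beta>\<in>{0..1}. \<mu> \<beta>) = max (\<mu> 0) (\<mu> 1)"
proof (rule max_at_two_points)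
  define d where "d = DIM('a)"
  define k where "k = measure lborel (nball N 0 1) / 2 ^ d"
  have k: "k > 0" and d: "d \<ge> 1"
    using measure_nball_pos[OF assms(1)] by (simp_all add: k_def d_def DIM_positive Suc_le_eq)
  have repr: "\<exists>s\<ge>0. H_lev (k * (1 - \<beta>) ^ d) (k * ((1 + \<beta>) ^ d - (1 - \<beta>) ^ d)) s = 1 / t
      \<and> \<mu> \<beta> = xi_lev (k * (1 - \<beta>) ^ d) (k * ((1 + \<beta>) ^ d - (1 - \<beta>) ^ d)) s"
    if "0 \<le> \<beta>" "\<beta> \<le> 1" for \<beta>
    using xi_phi_beta[OF assms(1) that assms(2)] by (simp add: assms(3) k_def d_def)
  obtain s0 where s0: "s0 \<ge> 0" "H_lev k 0 s0 = 1 / t" "\<mu> 0 = xi_lev k 0 s0"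
    using repr[of 0] by auto
  obtain s1 where s1: "s1 \<ge> 0" "H_lev 0 (k * 2 ^ d) s1 = 1 / t" "\<mu> 1 = xi_lev 0 (k * 2 ^ d) s1"
    using repr[of 1] d by (auto simp: zero_power)
  fix \<beta> :: real assume "\<beta> \<in> {0..1}"
  show "\<mu> \<beta> \<le> max (\<mu> 0) (\<mu> 1)"
  proof (cases "\<beta> = 0")
    case False
    with \<open>\<beta> \<in> {0..1}\<close> have \<beta>: "0 < \<beta>" "\<beta> \<le> 1" by auto
    obtain s where s: "H_lev (k * (1 - \<beta>) ^ d) (k * ((1 + \<beta>) ^ d - (1 - \<beta>) ^ d)) s = 1 / t"
      and \<mu>\<beta>: "\<mu> \<beta> = xi_lev (k * (1 - \<beta>) ^ d) (k * ((1 + \<beta>) ^ d - (1 - \<beta>) ^ d)) s"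
      using repr[of \<beta>] \<beta> by auto
    have W: "0 \<le> (1 - \<beta>) ^ d" "(1 - \<beta>) ^ d < 1" "(1 - \<beta>) ^ d \<le> (1 + \<beta>) ^ d"
      using \<beta> d by (auto simp: power_less_one_iff power_mono)
    have "1 / t > 0" "(1::real) \<le> 2 ^ d" using assms(2) by auto
    from xi_lev_le_endpoints[OF k this W phi_beta_poly_ineq s s0(1,2) s1(1,2)] show ?thesis
      using \<beta> d by (simp add: \<mu>\<beta> s0(3) s1(3))
  qed simp
qed auto

end
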